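(* Consider the two-unicast wireline network ("butterfly network 2") with nodes $\mathsf{S}_1,\mathsf{S}_2,\mathsf{M}_1,\mathsf{M}_2,\mathsf{D}_1,\mathsf{D}_2$ and seven directed edges: edge 1 from $\mathsf{S}_1$ to $\mathsf{M}_1$, edge 2 from $\mathsf{S}_2$ to $\mathsf{M}_1$, edge 3 from $\mathsf{M}_1$ to $\mathsf{M}_2$, edge 4 from $\mathsf{S}_1$ to $\mathsf{D}_1$, edge 5 from $\mathsf{S}_2$ to $\mathsf{D}_2$, edge 6 from $\mathsf{M}_2$ to $\mathsf{D}_2$, edge 7 from $\mathsf{M}_2$ to $\mathsf{D}_1$, where edge $i$ has capacity $\mathsf{C}_i\ge0$. Then every nonnegative rate pair $(R_1,R_2)$ satisfying $$R_1\le \min\{\mathsf{C}_1,\mathsf{C}_7\}+\min\{R_1,\mathsf{C}_4\},\quad R_2\le \min\{\mathsf{C}_2,\mathsf{C}_6\}+\min\{R_2,\mathsf{C}_5\},$$ $$R_1+R_2\le \mathsf{C}_3+\min\{R_2,\mathsf{C}_5\}+\min\{R_1,\mathsf{C}_4\}$$ is achievable (without security constraints).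
   Context: Network model: a directed acyclic graph; each edge $e$ is a noiseless orthogonal channel of capacity $\mathsf{C}_e$ carrying symbols over $\mathbb{F}_q$; over $n$ channel uses edge $e$ carries $X_e^n$, received as $Y_e^n=X_e^n$. Source $\mathsf{S}_i$ has message $W_i$ (uniform, $q$-ary entropy $nR_i$, $W_1,W_2$ independent) to be decoded at $\mathsf{D}_i$. A rate pair is achievable if for some block length $n$ there are encoding functions—an edge leaving $\mathsf{S}_i$ carries a function of $W_i$, any other edge a function of the symbols received on the incoming edges of its tail—and decoders at $\mathsf{D}_j$ (functions of the symbols on its incoming edges) recovering $W_j$ with vanishing error probability, $j=1,2$. *)

theory Defs
  imports Complex_Main
begin

text \<open>A block code of length n sends the message W_i (a word of k_i
  symbols, uniform) and edge e carries a word of m_e symbols with m_e \<le> n C_e.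
  Encoders: S1 computes X1, X4 from W1; S2 computes X2, X5 from W2; M1 computes X3
  from (X1,X2); M2 computes X6, X7 from X3.
  Error probability = fraction of message pairs on which some decoder errs.\<close>

definition msgs :: "nat \<Rightarrow> 'q list set" where
  "msgs k = {w. length w = k}"

definition butterfly2_achievable ::
  "'q itself \<Rightarrow> (nat \<Rightarrow> real) \<Rightarrow> real \<Rightarrow> real \<Rightarrow> bool" where
  "butterfly2_achievable qty C R1 R2 \<longleftrightarrow>
    (\<forall>\<epsilon>>0. \<exists>n::nat. n > 0 \<and> (\<exists>k1 k2::nat. \<exists>m::nat \<Rightarrow> nat.
      \<exists>f1 f4 :: 'q list \<Rightarrow> 'q list. \<exists>f2 f5 :: 'q list \<Rightarrow> 'q list.
      \<exists>f3 :: 'q list \<Rightarrow> 'q list \<Rightarrow> 'q list. \<exists>f6 f7 :: 'q list \<Rightarrow> 'q list.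
      \<exists>g1 g2 :: 'q list \<Rightarrow> 'q list \<Rightarrow> 'q list.
        real k1 \<ge> real n * (R1 - \<epsilon>) \<and> real k2 \<ge> real n * (R2 - \<epsilon>) \<and>
        (\<forall>e\<in>{1..7::nat}. real (m e) \<le> real n * C e) \<and>
        (\<forall>w1\<in>msgs k1. \<forall>w2\<in>msgs k2.
           length (f1 w1) = m 1 \<and> length (f4 w1) = m 4 \<and>
           length (f2 w2) = m 2 \<and> length (f5 w2) = m 5 \<and>
           length (f3 (f1 w1) (f2 w2)) = m 3 \<and>
           length (f6 (f3 (f1 w1) (f2 w2))) = m 6 \<and>
           length (f7 (f3 (f1 w1) (f2 w2))) = m 7) \<and>
        real (card {(w1, w2). w1 \<in> msgs k1 \<and> w2 \<in> msgs k2 \<and>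
            (g1 (f4 w1) (f7 (f3 (f1 w1) (f2 w2))) \<noteq> w1 \<or>
             g2 (f5 w2) (f6 (f3 (f1 w1) (f2 w2))) \<noteq> w2)})
          \<le> \<epsilon> * real (card ((msgs k1 :: 'q list set) \<times> (msgs k2 :: 'q list set)))))"

end

theory Submission
  imports Defs
begin

text \<open>Routing suffices.  Split each message \<open>W\<^sub>i\<close> into a direct part of rate
  \<open>min R\<^sub>1 C\<^sub>4\<close> (resp. \<open>min R\<^sub>2 C\<^sub>5\<close>), sent on the edge \<open>S\<^sub>i \<rightarrow> D\<^sub>i\<close>, and a routed
  part of the remaining rate, sent through \<open>M\<^sub>1\<close>; \<open>M\<^sub>1\<close> forwards both routed parts
  side by side on edge 3 and \<open>M\<^sub>2\<close> separates them again.  The three inequalities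
  say exactly that the routed rates fit on edges 1 and 7, on edges 2 and 6, and
  jointly on edge 3.  Rounding the scaled rates down loses at most two symbols per
  message, which is at most \<open>n \<epsilon>\<close> once \<open>n \<ge> 2 / \<epsilon>\<close>, and the code never errs.\<close>

text \<open>Block length \<open>n\<close>: \<open>A\<^sub>i\<close> symbols of \<open>W\<^sub>i\<close> go directly to \<open>D\<^sub>i\<close>, \<open>B\<^sub>i\<close> symbols
  are routed through \<open>M\<^sub>1, M\<^sub>2\<close>.\<close>
definition butterfly2_routing :: "(nat \<Rightarrow> real) \<Rightarrow> real \<Rightarrow> real \<Rightarrow> real \<Rightarrow> bool" where
  "butterfly2_routing C R1 R2 \<epsilon> \<longleftrightarrow> (\<exists>n A1 B1 A2 B2. n > 0 \<and>
      real n * (R1 - \<epsilon>) \<le> real (A1 + B1) \<and> real n * (R2 - \<epsilon>) \<le> real (A2 + B2) \<and>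
      real A1 \<le> real n * C 4 \<and> real A2 \<le> real n * C 5 \<and>
      real B1 \<le> real n * C 1 \<and> real B1 \<le> real n * C 7 \<and>
      real B2 \<le> real n * C 2 \<and> real B2 \<le> real n * C 6 \<and>
      real (B1 + B2) \<le> real n * C 3)"

lemma nat_floor_gt_diff_one: "0 \<le> x \<Longrightarrow> x - 1 < real (nat \<lfloor>x\<rfloor>)"
  by linarith

lemma butterfly2_achievable_by_routing:
  assumes "\<And>\<epsilon>. \<epsilon> > 0 \<Longrightarrow> butterfly2_routing C R1 R2 \<epsilon>"
  shows "butterfly2_achievable (TYPE('q)) C R1 R2"
  unfolding butterfly2_achievable_def
proof (intro allI impI, goal_cases)
  case (1 \<epsilon>)
  then obtain n A1 B1 A2 B2 where "n > 0"
    and rates: "real n * (R1 - \<epsilon>) \<le> real (A1 + B1)" "real n * (R2 - \<epsilon>) \<le> real (A2 + B2)"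
    and caps: "real A1 \<le> real n * C 4" "real A2 \<le> real n * C 5"
      "real B1 \<le> real n * C 1" "real B1 \<le> real n * C 7"
      "real B2 \<le> real n * C 2" "real B2 \<le> real n * C 6" "real (B1 + B2) \<le> real n * C 3"
    using assms unfolding butterfly2_routing_def by blast
  define m :: "nat \<Rightarrow> nat" where
    "m = (\<lambda>e. if e = 1 then B1 else if e = 2 then B2 else if e = 3 then B1 + B2
       else if e = 4 then A1 else if e = 5 then A2 else if e = 6 then B2 else B1)"
  have capacities: "\<forall>e\<in>{1..7::nat}. real (m e) \<le> real n * C e"
  proof
    fix e :: nat assume "e \<in> {1..7}"
    then have "e = 1 \<or> e = 2 \<or> e = 3 \<or> e = 4 \<or> e = 5 \<or> e = 6 \<or> e = 7" by auto
    then show "real (m e) \<le> real n * C e"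
      using caps unfolding m_def by auto
  qed
  have lengths: "\<forall>w1\<in>msgs (A1 + B1). \<forall>w2\<in>msgs (A2 + B2).
      length (drop A1 w1) = m 1 \<and> length (take A1 w1) = m 4 \<and>
      length (drop A2 w2) = m 2 \<and> length (take A2 w2) = m 5 \<and>
      length (drop A1 w1 @ drop A2 w2) = m 3 \<and>
      length (drop B1 (drop A1 w1 @ drop A2 w2)) = m 6 \<and>
      length (take B1 (drop A1 w1 @ drop A2 w2)) = m 7"
    by (auto simp: msgs_def m_def)
  have no_errors: "{(w1, w2). w1 \<in> msgs (A1 + B1) \<and> w2 \<in> msgs (A2 + B2) \<and>
      (take A1 w1 @ take B1 (drop A1 w1 @ drop A2 w2) \<noteq> w1 \<or>
       take A2 w2 @ drop B1 (drop A1 w1 @ drop A2 w2) \<noteq> w2)} = ({} :: ('q list \<times> 'q list) set)"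
    by (auto simp: msgs_def)
  show ?case
    by (rule exI[of _ n], rule conjI[OF \<open>n > 0\<close>], rule exI[of _ "A1 + B1"],
        rule exI[of _ "A2 + B2"], rule exI[of _ m], rule exI[of _ "drop A1"],
        rule exI[of _ "take A1"], rule exI[of _ "drop A2"], rule exI[of _ "take A2"],
        rule exI[of _ "(@)"], rule exI[of _ "drop B1"], rule exI[of _ "take B1"],
        rule exI[of _ "(@)"], rule exI[of _ "(@)"])
      (intro conjI capacities lengths rates, simp only: no_errors, use \<open>\<epsilon> > 0\<close> in simp)
qed

lemma butterfly2_routing_of_rate_split:
  assumes "0 \<le> a1" "0 \<le> r1" "0 \<le> a2" "0 \<le> r2"
    and "a1 \<le> C 4" "a2 \<le> C 5" "r1 \<le> C 1" "r1 \<le> C 7" "r2 \<le> C 2" "r2 \<le> C 6"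
    and "r1 + r2 \<le> C 3"
    and "\<epsilon> > 0"
  shows "butterfly2_routing C (a1 + r1) (a2 + r2) \<epsilon>"
proof -
  obtain n :: nat where "2 / \<epsilon> < real n"
    using reals_Archimedean2 by blast
  with \<open>\<epsilon> > 0\<close> have "n > 0" and "2 \<le> real n * \<epsilon>"
    by (auto simp: field_simps intro: Nat.gr0I)
  define A1 where "A1 = nat \<lfloor>real n * a1\<rfloor>"
  define B1 where "B1 = nat \<lfloor>real n * r1\<rfloor>"
  define A2 where "A2 = nat \<lfloor>real n * a2\<rfloor>"
  define B2 where "B2 = nat \<lfloor>real n * r2\<rfloor>"
  have nonneg: "0 \<le> real n * a1" "0 \<le> real n * r1" "0 \<le> real n * a2" "0 \<le> real n * r2"
    using assms by simp_all
  have below: "real A1 \<le> real n * a1" "real B1 \<le> real n * r1"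
      "real A2 \<le> real n * a2" "real B2 \<le> real n * r2"
    unfolding A1_def B1_def A2_def B2_def using nonneg by (simp_all add: of_nat_floor)
  have above: "real n * a1 - 1 < real A1" "real n * r1 - 1 < real B1"
      "real n * a2 - 1 < real A2" "real n * r2 - 1 < real B2"
    unfolding A1_def B1_def A2_def B2_def using nonneg by (simp_all add: nat_floor_gt_diff_one)
  have scale: "\<And>x y. x \<le> y \<Longrightarrow> real n * x \<le> real n * y"
    by (simp add: mult_left_mono)
  have "real n * (a1 + r1 - \<epsilon>) \<le> real (A1 + B1)" "real n * (a2 + r2 - \<epsilon>) \<le> real (A2 + B2)"
    using above \<open>2 \<le> real n * \<epsilon>\<close> by (simp_all add: algebra_simps)
  moreover have "real A1 \<le> real n * C 4" "real A2 \<le> real n * C 5"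
    "real B1 \<le> real n * C 1" "real B1 \<le> real n * C 7"
    "real B2 \<le> real n * C 2" "real B2 \<le> real n * C 6" "real (B1 + B2) \<le> real n * C 3"
    using below scale[OF assms(5)] scale[OF assms(6)] scale[OF assms(7)] scale[OF assms(8)]
      scale[OF assms(9)] scale[OF assms(10)] scale[OF assms(11)]
    by (simp_all add: distrib_left)
  ultimately show ?thesis
    using \<open>n > 0\<close> unfolding butterfly2_routing_def by blast
qed

theorem theorem7:
  fixes C :: "nat \<Rightarrow> real" and R1 R2 :: real
  assumes "\<forall>e\<in>{1..7::nat}. C e \<ge> 0"
    and "R1 \<ge> 0" and "R2 \<ge> 0"
    and "R1 \<le> min (C 1) (C 7) + min R1 (C 4)"
    and "R2 \<le> min (C 2) (C 6) + min R2 (C 5)"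
    and "R1 + R2 \<le> C 3 + min R2 (C 5) + min R1 (C 4)"
  shows "butterfly2_achievable (TYPE('q::{finite,field})) C R1 R2"
proof (rule butterfly2_achievable_by_routing)
  fix \<epsilon> :: real assume "\<epsilon> > 0"
  have "C 4 \<ge> 0" "C 5 \<ge> 0"
    using assms(1) by auto
  with assms \<open>\<epsilon> > 0\<close> have "butterfly2_routing C
      (min R1 (C 4) + (R1 - min R1 (C 4))) (min R2 (C 5) + (R2 - min R2 (C 5))) \<epsilon>"
    by (intro butterfly2_routing_of_rate_split) auto
  then show "butterfly2_routing C R1 R2 \<epsilon>"
    by simp
qed

end
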